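(* Let $m \equiv 3 \pmod 4$ with $m > 3$, $n = 3^m - 1$, $v = (3^{(m-1)/2}-1)/2$ and $\delta = (3^{(m-1)/2}+11)/2$. Then $\gcd(v,n) = 1$, and, setting $T_{(0,1,m)}(v) = \{ vi \bmod n : i \in T_{(0,1,m)}\}$, we have $\{n-(\delta-1), \ldots, n-2, n-1\} \subseteq T_{(0,1,m)}(v)$.
   Context: For an integer $0 \le j \le n-1$ with $3$-adic expansion $j = \sum_{t=0}^{m-1} j_t 3^t$, $j_t \in \{0,1,2\}$, let $w_3(j) = \sum_{t=0}^{m-1} j_t$. For distinct $i_1,i_2 \in \{0,1,2,3\}$, $T_{(i_1,i_2,m)} = \{1 \le j \le n-1 : w_3(j) \equiv i_1 \text{ or } i_2 \pmod 4\}$. For an integer $b$, $b \bmod n$ is the unique $b_0 \in \{0,\ldots,n-1\}$ with $b \equiv b_0 \pmod n$. *)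

theory Defs
  imports Main
begin

fun w3 :: "nat \<Rightarrow> nat" where
  "w3 j = (if j = 0 then 0 else j mod 3 + w3 (j div 3))"

declare w3.simps [simp del]

definition T_set :: "nat \<Rightarrow> nat \<Rightarrow> nat \<Rightarrow> nat set" where
  "T_set i1 i2 m = {j. 1 \<le> j \<and> j \<le> 3 ^ m - 2 \<and> (w3 j mod 4 = i1 \<or> w3 j mod 4 = i2)}"

end

theory Submission
  imports Defs
begin

(* Write K = 3^((m-1)/2) = 2v + 1 and p = (m+1)/2, so that n = 3K^2 - 1 = 12v^2 + 12v + 2 and
   3^p = 6v + 3.  The multiplier 3 + 3^p = 6(v+1) satisfies v (3 + 3^p) 2s = s (n - 2), hence
   j = e + (3 + 3^p) 2s has v j = e v - 2s modulo n.  The base-3 digits of j are e followed by two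
   copies of the digits of 2s, and w3 has the parity of its argument, so w3 j = e (mod 4).
   Taking e = 0, 2s = t for even t and e = 1, 2s = t + v for odd t <= v realises every n - t with
   t <= v + 5 except t = v + 2 and t = v + 4, which come from j = 12v + 11 and j = 24v + 23, both
   of weight 5.  Finally n = 2 (mod v) with v odd gives gcd v n = 1. *)

lemma w3_0 [simp]: "w3 0 = 0"
  by (simp add: w3.simps)

lemma w3_add_mult_3: "d < 3 \<Longrightarrow> w3 (d + 3 * a) = d + w3 a"
  by (subst w3.simps) auto

lemma w3_add_mult_pow3: "a < 3 ^ p \<Longrightarrow> w3 (a + 3 ^ p * b) = w3 a + w3 b"
proof (induction p arbitrary: a)
  case 0
  then show ?case by simp
next
  case (Suc p)
  have "a div 3 < 3 ^ p"
    using Suc.prems by auto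
  have "a + 3 ^ Suc p * b = a mod 3 + 3 * (a div 3 + 3 ^ p * b)"
    by simp
  then have "w3 (a + 3 ^ Suc p * b) = w3 (a mod 3 + 3 * (a div 3 + 3 ^ p * b))"
    by (rule arg_cong)
  also have "\<dots> = a mod 3 + w3 (a div 3 + 3 ^ p * b)"
    using w3_add_mult_3[of "a mod 3" "a div 3 + 3 ^ p * b"] by simp
  also have "\<dots> = a mod 3 + w3 (a div 3) + w3 b"
    using Suc.IH[OF \<open>a div 3 < 3 ^ p\<close>] by simp
  also have "a mod 3 + w3 (a div 3) = w3 a"
    using w3_add_mult_3[of "a mod 3" "a div 3"] by simp
  finally show ?case .
qed

lemma even_w3_iff: "even (w3 a) \<longleftrightarrow> even a"
proof (induction a rule: less_induct)
  case (less a)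
  show ?case
  proof (cases "a = 0")
    case False
    have "w3 a = a mod 3 + w3 (a div 3)"
      using w3_add_mult_3[of "a mod 3" "a div 3"] by simp
    moreover have "even (w3 (a div 3)) \<longleftrightarrow> even (a div 3)"
      using False by (intro less.IH) simp
    moreover have "even a \<longleftrightarrow> even (a mod 3 + a div 3)"
      by presburger
    ultimately show ?thesis
      by simp
  qed simp
qed

lemma w3_doubled_digits:
  assumes "e < 3" "e + 3 * x < 3 ^ p"
  shows "w3 (e + (3 + 3 ^ p) * x) = e + 2 * w3 x"
proof -
  have "w3 (e + (3 + 3 ^ p) * x) = w3 (e + 3 * x) + w3 x"
    using w3_add_mult_pow3[OF assms(2), of x] by (simp add: algebra_simps)
  then show ?thesis
    using w3_add_mult_3[OF assms(1)] by simp
qed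

lemma w3_doubled_digits_mod_4:
  assumes "even x" "e < 3" "e + 3 * x < 3 ^ p"
  shows "w3 (e + (3 + 3 ^ p) * x) mod 4 = e"
proof -
  obtain r where "w3 x = 2 * r"
    using assms(1) even_w3_iff by blast
  then show ?thesis
    using w3_doubled_digits[OF assms(2,3)] assms(2) by simp
qed

lemma diff_mem_image_mult_mod:
  fixes v j t c n :: nat
  assumes "v * j + t = c * n" "0 < t" "t < n" "j \<in> A"
  shows "n - t \<in> (\<lambda>i. v * i mod n) ` A"
proof -
  obtain c' where "c = Suc c'"
    using assms(1,2) by (cases c) auto
  then have "v * j = (n - t) + c' * n"
    using assms(1,3) by simp
  then have "v * j mod n = (n - t) mod n"
    by (metis mod_mult_self1)
  then have "v * j mod n = n - t"
    using assms(2,3) by simp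
  then show ?thesis
    using assms(4) by force
qed

context
  fixes v p :: nat
  assumes pow_p: "3 ^ p = 6 * v + 3"
begin

lemma doubled_digits_preimage:
  assumes "e \<le> 1" "s \<le> v"
  defines "j \<equiv> e + (3 + 3 ^ p) * (2 * s)"
  shows "w3 j mod 4 = e"
    and "v * j + 2 * s = e * v + s * (12 * v * v + 12 * v + 2)"
    and "j < 12 * v * v + 12 * v + 2"
proof -
  have j: "j = e + 12 * s * (v + 1)"
    unfolding j_def pow_p by (simp add: algebra_simps)
  show "w3 j mod 4 = e"
    unfolding j_def using assms(1,2) pow_p by (intro w3_doubled_digits_mod_4) auto
  show "v * j + 2 * s = e * v + s * (12 * v * v + 12 * v + 2)"
    unfolding j by (simp add: algebra_simps)
  have "12 * s * (v + 1) \<le> 12 * v * (v + 1)"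
    using assms(2) by (intro mult_le_mono1) simp
  then show "j < 12 * v * v + 12 * v + 2"
    unfolding j using assms(1) by (simp add: algebra_simps)
qed

lemma exists_preimage_of_neg:
  assumes "odd v" "5 \<le> v" "0 < t" "t \<le> v + 5"
  shows "\<exists>j c. 0 < j \<and> j < 12 * v * v + 12 * v + 2 \<and> w3 j mod 4 \<in> {0, 1}
           \<and> v * j + t = c * (12 * v * v + 12 * v + 2)"
proof -
  have "even t \<or> odd t \<and> t \<le> v \<or> t = v + 2 \<or> t = v + 4"
    using assms(1,4) by presburger
  then consider "even t" | "odd t" "t \<le> v" | "t = v + 2" | "t = v + 4"
    by blast
  then show ?thesis
  proof cases
    case 1
    then obtain s where s: "t = 2 * s" by blast
    then have "s \<le> v"
      using assms by simp
    note witness = doubled_digits_preimage[OF _ this, of 0]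
    have "v * ((3 + 3 ^ p) * (2 * s)) + t = s * (12 * v * v + 12 * v + 2)"
      using witness(2) s by simp
    then show ?thesis
      using witness(1,3) s assms(3) by (intro exI[of _ "(3 + 3 ^ p) * (2 * s)"] exI[of _ s]) auto
  next
    case 2
    then obtain s where s: "t + v = 2 * s"
      using assms(1) by (metis odd_add evenE)
    then have "s \<le> v"
      using 2 by simp
    note witness = doubled_digits_preimage[OF _ this, of 1]
    have "v * (1 + (3 + 3 ^ p) * (2 * s)) + (t + v) = v + s * (12 * v * v + 12 * v + 2)"
      unfolding s using witness(2) by simp
    then have "v * (1 + (3 + 3 ^ p) * (2 * s)) + t = s * (12 * v * v + 12 * v + 2)"
      by (simp only: add.assoc[symmetric] add.commute[of _ v] add_right_cancel)
    then show ?thesis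
      using witness(1,3) by (intro exI[of _ "1 + (3 + 3 ^ p) * (2 * s)"] exI[of _ s]) auto
  next
    case 3
    have "w3 (5 + 3 ^ p * 2) = w3 5 + w3 2"
      using assms(2) pow_p by (intro w3_add_mult_pow3) simp
    also have "\<dots> = 5"
      by (simp add: w3.simps)
    finally have "w3 (12 * v + 11) mod 4 = 1"
      using pow_p by (simp add: add.commute)
    moreover have "v * (12 * v + 11) + t = 1 * (12 * v * v + 12 * v + 2)"
      using 3 by (simp add: algebra_simps)
    moreover have "12 * v + 11 < 12 * v * v + 12 * v + 2"
      using assms(2) mult_le_mono2[OF assms(2), of "12 * v"] by linarith
    ultimately show ?thesis
      by (intro exI[of _ "12 * v + 11"] exI[of _ 1]) simp
  next
    case 4
    have "w3 (11 + 3 ^ p * 4) = w3 11 + w3 4"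
      using assms(2) pow_p by (intro w3_add_mult_pow3) simp
    also have "\<dots> = 5"
      by (simp add: w3.simps)
    finally have "w3 (24 * v + 23) mod 4 = 1"
      using pow_p by (simp add: add.commute)
    moreover have "v * (24 * v + 23) + t = 2 * (12 * v * v + 12 * v + 2)"
      using 4 by (simp add: algebra_simps)
    moreover have "24 * v + 23 < 12 * v * v + 12 * v + 2"
      using assms(2) mult_le_mono2[OF assms(2), of "12 * v"] by linarith
    ultimately show ?thesis
      by (intro exI[of _ "24 * v + 23"] exI[of _ 2]) simp
  qed
qed

lemma diff_mem_image_T_set:
  assumes "odd v" "5 \<le> v" "3 ^ m - 1 = 12 * v * v + 12 * v + 2" "0 < t" "t \<le> v + 5"
  shows "(3 ^ m - 1) - t \<in> (\<lambda>i. v * i mod (3 ^ m - 1)) ` T_set 0 1 m"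
proof -
  obtain j c where "0 < j" "j < 3 ^ m - 1" "w3 j mod 4 \<in> {0, 1}" "v * j + t = c * (3 ^ m - 1)"
    using exists_preimage_of_neg[OF assms(1,2,4,5)] assms(3) by auto
  moreover have "j \<in> T_set 0 1 m"
    using calculation unfolding T_set_def by auto
  moreover have "t < 3 ^ m - 1"
    unfolding assms(3) using assms(2,5) by linarith
  ultimately show ?thesis
    using assms(4) by (intro diff_mem_image_mult_mod) auto
qed

end

lemma three_pow_odd_mod_4:
  assumes "odd k"
  shows "(3::nat) ^ k mod 4 = 3"
proof -
  obtain i where "k = 2 * i + 1"
    using assms oddE by blast
  moreover have "(9::nat) ^ i mod 4 = 1"
    using power_mod[of "9::nat" 4 i] by simp
  ultimately show ?thesis
    by (simp add: power_mult power_add mod_mult_right_eq[of 3, symmetric])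
qed

lemma parameters_of_exponent:
  fixes m :: nat
  assumes "m mod 4 = 3" "3 < m"
  defines "v \<equiv> ((3::nat) ^ ((m - 1) div 2) - 1) div 2"
  shows "odd v" "13 \<le> v" "(3 ^ ((m - 1) div 2) + 11) div 2 = v + 6"
    and "3 ^ ((m - 1) div 2 + 1) = 6 * v + 3" "3 ^ m - 1 = 12 * v * v + 12 * v + 2"
proof -
  define k where "k = (m - 1) div 2"
  define K :: nat where "K = 3 ^ k"
  have m: "m = 2 * k + 1" and "odd k" and "3 \<le> k"
    using assms(1,2) unfolding k_def by presburger+
  have "K mod 4 = 3"
    unfolding K_def using \<open>odd k\<close> by (rule three_pow_odd_mod_4)
  then have K: "K = 2 * v + 1"
    unfolding v_def k_def[symmetric] K_def[symmetric] by presburger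
  from \<open>K mod 4 = 3\<close> show "odd v"
    unfolding v_def k_def[symmetric] K_def[symmetric] by presburger
  have "(3::nat) ^ 3 \<le> K"
    unfolding K_def using \<open>3 \<le> k\<close> by (rule power_increasing) simp
  then show "13 \<le> v"
    using K by simp
  show "(3 ^ ((m - 1) div 2) + 11) div 2 = v + 6"
    unfolding k_def[symmetric] K_def[symmetric] K by simp
  show "3 ^ ((m - 1) div 2 + 1) = 6 * v + 3"
    using K unfolding k_def[symmetric] K_def by simp
  have "(3::nat) ^ m = 3 * K * K"
    unfolding m K_def by (simp add: mult_2 power_add)
  then show "3 ^ m - 1 = 12 * v * v + 12 * v + 2"
    unfolding K by (simp add: algebra_simps)
qed

theorem lemma6:
  fixes m :: nat
  assumes "m mod 4 = 3" and "m > 3"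
  defines "n \<equiv> 3 ^ m - 1"
      and "v \<equiv> (3 ^ ((m - 1) div 2) - 1) div 2"
      and "\<delta> \<equiv> (3 ^ ((m - 1) div 2) + 11) div 2"
  shows "gcd v n = 1 \<and> {n - (\<delta> - 1) .. n - 1} \<subseteq> (\<lambda>i. (v * i) mod n) ` T_set 0 1 m"
proof -
  note params = parameters_of_exponent[OF assms(1,2), folded v_def \<delta>_def n_def]
  have "gcd v n = gcd v 2"
    unfolding params(5) by (metis gcd_add_mult mult.commute distrib_left)
  then have "gcd v n = 1"
    using params(1) by simp
  moreover have "{n - (\<delta> - 1) .. n - 1} \<subseteq> (\<lambda>i. v * i mod n) ` T_set 0 1 m"
  proof
    fix y
    assume "y \<in> {n - (\<delta> - 1) .. n - 1}"
    then have y: "y = n - (n - y)" and "0 < n - y" "n - y \<le> v + 5"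
      using params(3,5) by auto
    have "5 \<le> v"
      using params(2) by simp
    have "n - (n - y) \<in> (\<lambda>i. v * i mod n) ` T_set 0 1 m"
      using diff_mem_image_T_set[OF params(4,1) \<open>5 \<le> v\<close> params(5)[unfolded n_def]
          \<open>0 < n - y\<close> \<open>n - y \<le> v + 5\<close>]
      unfolding n_def .
    then show "y \<in> (\<lambda>i. v * i mod n) ` T_set 0 1 m"
      by (subst y)
  qed
  ultimately show ?thesis
    by blast
qed

end
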